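(* Let $d\in\mathbb{N}$, $n\geq 3$, and let $k$ be a nonnegative integer with $k\leq \frac{n}{4d+6}-d-5$. Let $G$ and $H$ be graphs on $n$ vertices, each with average degree at most $d$. Suppose there are distinct vertices $u_1,\dots,u_{n-k}$ of $G$ and distinct vertices $w_1,\dots,w_{n-k}$ of $H$ such that $G-u_i\cong H-w_i$ for every $i\in[n-k]$. Then $|E(G)|=|E(H)|$. (That is, the number of edges of a graph with average degree at most $d$ can be reconstructed from any deck missing at most $\frac{n}{4d+6}-d-5$ cards.)
   Context: All graphs are finite, simple and undirected. For a graph $G$ and $v\in V(G)$, the card $G-v$ is the graph obtained by deleting $v$ and all edges incident to it; the deck of $G$ is the multiset of unlabelled cards $G-v$, $v\in V(G)$. The average degree of an $n$-vertex graph with $m$ edges is $2m/n$. *)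

theory Defs
  imports Complex_Main
begin

definition simple_graph :: "'a set \<Rightarrow> 'a set set \<Rightarrow> bool" where
  "simple_graph V E \<longleftrightarrow> finite V \<and> (\<forall>e\<in>E. e \<subseteq> V \<and> card e = 2)"

definition del_vertex_edges :: "'a set set \<Rightarrow> 'a \<Rightarrow> 'a set set" where
  "del_vertex_edges E v = {e \<in> E. v \<notin> e}"

definition graph_iso :: "'a set \<Rightarrow> 'a set set \<Rightarrow> 'b set \<Rightarrow> 'b set set \<Rightarrow> bool" where
  "graph_iso V1 E1 V2 E2 \<longleftrightarrow>
     (\<exists>f. bij_betw f V1 V2 \<and> (\<forall>x\<in>V1. \<forall>y\<in>V1. {x, y} \<in> E1 \<longleftrightarrow> {f x, f y} \<in> E2))"

definition avg_degree :: "'a set \<Rightarrow> 'a set set \<Rightarrow> real" where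
  "avg_degree V E = 2 * real (card E) / real (card V)"

end

theory Submission
  imports Defs
begin

text \<open>Suppose e(G) > e(H). A common card G - u \<cong> H - w forces
  deg u - deg w = e(G) - e(H) \<ge> 1. A card also determines the capped degree sum \<Psi>,
  the sum of min(deg v, T) over all vertices v, and deleting u lowers \<Psi> by
  min(deg u, T) + \<lambda>(u), where \<lambda>(u) counts the neighbours of u of degree at most T.
  Summing these identities over the n - k common cards, and bounding the \<lambda>-sums by
  \<Psi> and by the handshake lemma, gives a quadratic inequality in n that fails once
  k \<le> n / (4d + 6) - d - 5. The cap T = 2d + 2 leaves fewer than dn / (2d + 3)
  vertices of degree above T, the only vertices whose capped degree need not drop
  from G to H.\<close>

definition neighbours :: "'a set \<Rightarrow> 'a set set \<Rightarrow> 'a \<Rightarrow> 'a set" where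
  "neighbours V E v = {y \<in> V. {v, y} \<in> E}"

definition degree :: "'a set \<Rightarrow> 'a set set \<Rightarrow> 'a \<Rightarrow> nat" where
  "degree V E v = card (neighbours V E v)"

definition capped_degree_sum :: "nat \<Rightarrow> 'a set \<Rightarrow> 'a set set \<Rightarrow> nat" where
  "capped_degree_sum T V E = (\<Sum>v\<in>V. min (degree V E v) T)"

definition low_nbr_count :: "nat \<Rightarrow> 'a set \<Rightarrow> 'a set set \<Rightarrow> 'a \<Rightarrow> nat" where
  "low_nbr_count T V E u = card {v \<in> neighbours V E u. degree V E v \<le> T}"

subsection \<open>Degrees in simple graphs\<close>

lemma neighbours_subset: "neighbours V E v \<subseteq> V"
  by (auto simp: neighbours_def)

lemma simple_graph_finite_vertices: "simple_graph V E \<Longrightarrow> finite V"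
  by (simp add: simple_graph_def)

lemma simple_graph_finite_edges:
  assumes "simple_graph V E"
  shows "finite E"
proof (rule finite_subset)
  show "E \<subseteq> Pow V" using assms by (auto simp: simple_graph_def)
  show "finite (Pow V)" using assms by (simp add: simple_graph_def)
qed

lemma finite_neighbours: "simple_graph V E \<Longrightarrow> finite (neighbours V E v)"
  by (meson finite_subset neighbours_subset simple_graph_finite_vertices)

lemma not_in_neighbours_self: "simple_graph V E \<Longrightarrow> v \<notin> neighbours V E v"
  by (auto simp: neighbours_def simple_graph_def)

lemma neighbours_commute:
  "u \<in> V \<Longrightarrow> v \<in> V \<Longrightarrow> u \<in> neighbours V E v \<longleftrightarrow> v \<in> neighbours V E u"
  by (auto simp: neighbours_def insert_commute)

lemma degree_le_card: "simple_graph V E \<Longrightarrow> degree V E v \<le> card V"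
  unfolding degree_def by (intro card_mono simple_graph_finite_vertices neighbours_subset)

lemma card_incident_edges:
  assumes s: "simple_graph V E"
  shows "card {e \<in> E. v \<in> e} = degree V E v"
proof -
  have "bij_betw (\<lambda>y. {v, y}) (neighbours V E v) {e \<in> E. v \<in> e}"
  proof (rule bij_betwI')
    fix e assume e: "e \<in> {e \<in> E. v \<in> e}"
    then have "e \<subseteq> V" "card e = 2" using s by (auto simp: simple_graph_def)
    then obtain y where "e = {v, y}"
      using e by (auto simp: card_2_iff doubleton_eq_iff)
    with e \<open>e \<subseteq> V\<close> show "\<exists>y\<in>neighbours V E v. e = {v, y}"
      by (auto simp: neighbours_def)
  qed (auto simp: neighbours_def doubleton_eq_iff)
  then show ?thesis by (simp add: degree_def bij_betw_same_card)
qed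

lemma handshake:
  assumes s: "simple_graph V E"
  shows "(\<Sum>v\<in>V. degree V E v) = 2 * card E"
proof -
  have fV: "finite V" and fE: "finite E"
    using s simple_graph_finite_vertices simple_graph_finite_edges by auto
  have "(\<Sum>v\<in>V. degree V E v) = (\<Sum>v\<in>V. \<Sum>e\<in>E. if v \<in> e then 1 else 0)"
    using fE by (simp add: card_incident_edges[OF s, symmetric] sum.inter_filter[symmetric])
  also have "\<dots> = (\<Sum>e\<in>E. \<Sum>v\<in>V. if v \<in> e then 1 else 0)"
    by (rule sum.swap)
  also have "\<dots> = (\<Sum>e\<in>E. 2)"
  proof (rule sum.cong)
    fix e assume "e \<in> E"
    then have "e \<subseteq> V" "card e = 2" using s by (auto simp: simple_graph_def)
    then have "{v \<in> V. v \<in> e} = e" by auto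
    then show "(\<Sum>v\<in>V. if v \<in> e then 1 else 0) = (2::nat)"
      using fV \<open>card e = 2\<close> by (simp add: sum.inter_filter[symmetric])
  qed simp
  finally show ?thesis by simp
qed

lemma avg_degree_le_imp_edge_bound:
  assumes "avg_degree V E \<le> real d" and "card V > 0"
  shows "2 * card E \<le> d * card V"
proof -
  have "2 * real (card E) \<le> real d * real (card V)"
    using assms by (simp add: avg_degree_def divide_le_eq)
  then have "real (2 * card E) \<le> real (d * card V)" by simp
  then show ?thesis by (simp only: of_nat_le_iff)
qed

lemma card_high_degree_le:
  assumes s: "simple_graph V E" and S: "S \<subseteq> V"
  shows "(T + 1) * card {v \<in> S. T < degree V E v} \<le> 2 * card E"
proof -
  have fV: "finite V" using s simple_graph_finite_vertices by auto
  have "(T + 1) * card {v \<in> S. T < degree V E v} = (\<Sum>v\<in>S. if T < degree V E v then T + 1 else 0)"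
    using finite_subset[OF S fV] by (simp add: sum.inter_filter[symmetric])
  also have "\<dots> \<le> (\<Sum>v\<in>S. degree V E v)"
    by (intro sum_mono) auto
  also have "\<dots> \<le> (\<Sum>v\<in>V. degree V E v)"
    using S fV by (intro sum_mono2) auto
  finally show ?thesis using handshake[OF s] by simp
qed

subsection \<open>Deleting a vertex\<close>

lemma simple_graph_del_vertex:
  "simple_graph V E \<Longrightarrow> simple_graph (V - {u}) (del_vertex_edges E u)"
  by (auto simp: simple_graph_def del_vertex_edges_def)

lemma neighbours_del_vertex:
  "v \<noteq> u \<Longrightarrow> neighbours (V - {u}) (del_vertex_edges E u) v = neighbours V E v - {u}"
  by (auto simp: neighbours_def del_vertex_edges_def)

lemma card_del_vertex_edges:
  assumes s: "simple_graph V E"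
  shows "card (del_vertex_edges E u) + degree V E u = card E"
proof -
  have "E = del_vertex_edges E u \<union> {e \<in> E. u \<in> e}"
    and "del_vertex_edges E u \<inter> {e \<in> E. u \<in> e} = {}"
    by (auto simp: del_vertex_edges_def)
  then have "card E = card (del_vertex_edges E u) + card {e \<in> E. u \<in> e}"
    using simple_graph_finite_edges[OF s] by (metis card_Un_disjoint finite_Un)
  then show ?thesis using card_incident_edges[OF s] by simp
qed

lemma capped_degree_sum_del_vertex:
  assumes s: "simple_graph V E" and u: "u \<in> V"
  shows "capped_degree_sum T V E
    = capped_degree_sum T (V - {u}) (del_vertex_edges E u) + min (degree V E u) T + low_nbr_count T V E u"
proof -
  let ?V = "V - {u}" and ?E = "del_vertex_edges E u"
  let ?lost = "\<lambda>v. if v \<in> neighbours V E u \<and> degree V E v \<le> T then 1 else 0"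
  have fV: "finite V" using s simple_graph_finite_vertices by auto
  have capped_lost: "min (degree V E v) T = min (degree ?V ?E v) T + ?lost v" if v: "v \<in> ?V" for v
  proof -
    have vV: "v \<in> V" "v \<noteq> u" using v by auto
    have deg: "degree ?V ?E v = degree V E v - (if u \<in> neighbours V E v then 1 else 0)"
      using neighbours_del_vertex[OF vV(2)] finite_neighbours[OF s]
      by (simp add: degree_def card_Diff_singleton_if)
    show ?thesis
    proof (cases "v \<in> neighbours V E u")
      case True
      then have "u \<in> neighbours V E v" using neighbours_commute u vV by metis
      then have "degree V E v \<ge> 1" using finite_neighbours[OF s] unfolding degree_def
        by (metis One_nat_def Suc_leI card_gt_0_iff empty_iff)
      then show ?thesis using deg \<open>u \<in> neighbours V E v\<close> True by auto
    next
      case False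
      then have "u \<notin> neighbours V E v" using neighbours_commute u vV by metis
      then show ?thesis using deg False by auto
    qed
  qed
  have "{v \<in> ?V. v \<in> neighbours V E u \<and> degree V E v \<le> T} = {v \<in> neighbours V E u. degree V E v \<le> T}"
    using not_in_neighbours_self[OF s, of u] neighbours_subset[of V E u] by auto
  then have "(\<Sum>v\<in>?V. ?lost v) = low_nbr_count T V E u"
    using fV by (simp add: low_nbr_count_def sum.inter_filter[symmetric])
  moreover have "(\<Sum>v\<in>?V. min (degree V E v) T) = capped_degree_sum T ?V ?E + (\<Sum>v\<in>?V. ?lost v)"
    unfolding capped_degree_sum_def sum.distrib[symmetric] by (rule sum.cong[OF refl capped_lost])
  moreover have "capped_degree_sum T V E = min (degree V E u) T + (\<Sum>v\<in>?V. min (degree V E v) T)"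
    unfolding capped_degree_sum_def using fV u by (simp add: sum.remove)
  ultimately show ?thesis by linarith
qed

subsection \<open>Counting neighbours of low degree\<close>

lemma sum_low_nbr_count:
  assumes s: "simple_graph V E"
  shows "(\<Sum>v\<in>V. low_nbr_count T V E v) = (\<Sum>y\<in>V. if degree V E y \<le> T then degree V E y else 0)"
proof -
  have fV: "finite V" using s simple_graph_finite_vertices by auto
  let ?adj = "\<lambda>v y. if {v, y} \<in> E \<and> degree V E y \<le> T then 1 else (0::nat)"
  have "(\<Sum>v\<in>V. low_nbr_count T V E v) = (\<Sum>v\<in>V. \<Sum>y\<in>V. ?adj v y)"
  proof (rule sum.cong)
    fix v
    have "{y \<in> neighbours V E v. degree V E y \<le> T} = {y \<in> V. {v, y} \<in> E \<and> degree V E y \<le> T}"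
      by (auto simp: neighbours_def)
    then show "low_nbr_count T V E v = (\<Sum>y\<in>V. ?adj v y)"
      unfolding low_nbr_count_def using fV by (simp add: sum.inter_filter[symmetric])
  qed simp
  also have "\<dots> = (\<Sum>y\<in>V. \<Sum>v\<in>V. ?adj v y)"
    by (rule sum.swap)
  also have "\<dots> = (\<Sum>y\<in>V. if degree V E y \<le> T then degree V E y else 0)"
  proof (rule sum.cong)
    fix y
    have "{v \<in> V. {v, y} \<in> E} = neighbours V E y" by (auto simp: neighbours_def insert_commute)
    then have "(\<Sum>v\<in>V. if {v, y} \<in> E then 1 else 0) = degree V E y"
      unfolding degree_def using fV by (simp add: sum.inter_filter[symmetric])
    then show "(\<Sum>v\<in>V. ?adj v y) = (if degree V E y \<le> T then degree V E y else 0)"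
      by (cases "degree V E y \<le> T") auto
  qed simp
  finally show ?thesis .
qed

lemma sum_low_nbr_count_le_capped_degree_sum:
  assumes s: "simple_graph V E" and S: "S \<subseteq> V"
  shows "(\<Sum>v\<in>S. low_nbr_count T V E v) \<le> capped_degree_sum T V E"
proof -
  have "(\<Sum>v\<in>S. low_nbr_count T V E v) \<le> (\<Sum>v\<in>V. low_nbr_count T V E v)"
    using S simple_graph_finite_vertices[OF s] by (intro sum_mono2) auto
  also have "\<dots> \<le> capped_degree_sum T V E"
    unfolding sum_low_nbr_count[OF s] capped_degree_sum_def by (intro sum_mono) auto
  finally show ?thesis .
qed

lemma capped_degree_sum_le_sum_low_nbr_count:
  assumes s: "simple_graph V E" and S: "S \<subseteq> V"
  shows "capped_degree_sum T V E
    \<le> (\<Sum>v\<in>S. low_nbr_count T V E v) + card (V - S) * card V + 2 * card E"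
proof -
  have fV: "finite V" using s simple_graph_finite_vertices by auto
  have "low_nbr_count T V E v \<le> degree V E v" for v
    unfolding low_nbr_count_def degree_def by (intro card_mono finite_neighbours[OF s]) auto
  then have "low_nbr_count T V E v \<le> card V" for v
    using degree_le_card[OF s, of v] le_trans by blast
  then have "(\<Sum>v\<in>V - S. low_nbr_count T V E v) \<le> card (V - S) * card V"
    using sum_bounded_above[of "V - S" "low_nbr_count T V E" "card V"] by simp
  moreover have "(\<Sum>v\<in>V. low_nbr_count T V E v)
      = (\<Sum>v\<in>S. low_nbr_count T V E v) + (\<Sum>v\<in>V - S. low_nbr_count T V E v)"
    using S fV by (simp add: sum.subset_diff[of S V])
  moreover have "capped_degree_sum T V E \<le> (\<Sum>v\<in>V. low_nbr_count T V E v) + 2 * card E"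
    unfolding sum_low_nbr_count[OF s] handshake[OF s, symmetric] capped_degree_sum_def sum.distrib[symmetric]
    by (intro sum_mono) auto
  ultimately show ?thesis by linarith
qed

subsection \<open>What a card determines\<close>

lemma graph_iso_sum_degree:
  assumes "graph_iso V1 E1 V2 E2"
  shows "(\<Sum>v\<in>V1. g (degree V1 E1 v)) = (\<Sum>v\<in>V2. g (degree V2 E2 v))"
proof -
  obtain f where bij: "bij_betw f V1 V2"
    and edges: "\<forall>x\<in>V1. \<forall>y\<in>V1. {x, y} \<in> E1 \<longleftrightarrow> {f x, f y} \<in> E2"
    using assms unfolding graph_iso_def by blast
  have img: "f ` V1 = V2" and inj: "inj_on f V1" using bij by (auto simp: bij_betw_def)
  have "neighbours V2 E2 (f v) = f ` neighbours V1 E1 v" if "v \<in> V1" for v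
    using that edges img by (auto simp: neighbours_def)
  then have "degree V2 E2 (f v) = degree V1 E1 v" if "v \<in> V1" for v
    using that inj neighbours_subset by (metis card_image degree_def inj_on_subset)
  then show ?thesis
    using sum.reindex[OF inj, of "\<lambda>v. g (degree V2 E2 v)"] img by simp
qed

lemma graph_iso_card_edges:
  assumes "simple_graph V1 E1" "simple_graph V2 E2" "graph_iso V1 E1 V2 E2"
  shows "card E1 = card E2"
  using graph_iso_sum_degree[OF assms(3), of id] handshake[OF assms(1)] handshake[OF assms(2)]
  by simp

lemma graph_iso_capped_degree_sum:
  "graph_iso V1 E1 V2 E2 \<Longrightarrow> capped_degree_sum T V1 E1 = capped_degree_sum T V2 E2"
  unfolding capped_degree_sum_def by (rule graph_iso_sum_degree)

lemma common_card_degree_difference: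
  assumes sG: "simple_graph VG EG" and sH: "simple_graph VH EH"
    and iso: "graph_iso (VG - {u}) (del_vertex_edges EG u) (VH - {w}) (del_vertex_edges EH w)"
  shows "card EG + degree VH EH w = card EH + degree VG EG u"
  using graph_iso_card_edges[OF simple_graph_del_vertex[OF sG] simple_graph_del_vertex[OF sH] iso]
    card_del_vertex_edges[OF sG, of u] card_del_vertex_edges[OF sH, of w]
  by linarith

lemma common_card_capped_degree_sum:
  assumes sG: "simple_graph VG EG" and sH: "simple_graph VH EH" and "u \<in> VG" "w \<in> VH"
    and iso: "graph_iso (VG - {u}) (del_vertex_edges EG u) (VH - {w}) (del_vertex_edges EH w)"
  shows "capped_degree_sum T VH EH + min (degree VG EG u) T + low_nbr_count T VG EG u
    = capped_degree_sum T VG EG + min (degree VH EH w) T + low_nbr_count T VH EH w"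
  using graph_iso_capped_degree_sum[OF iso, of T]
    capped_degree_sum_del_vertex[OF sG \<open>u \<in> VG\<close>, of T] capped_degree_sum_del_vertex[OF sH \<open>w \<in> VH\<close>, of T]
  by linarith

subsection \<open>Counting over the partial deck\<close>

lemma sum_capped_degree_le_capped_degree_sum:
  "finite V \<Longrightarrow> S \<subseteq> V \<Longrightarrow> (\<Sum>v\<in>S. min (degree V E v) T) \<le> capped_degree_sum T V E"
  unfolding capped_degree_sum_def by (rule sum_mono2) auto

lemma capped_degree_sum_le_sum_capped_degree:
  assumes "finite V" "S \<subseteq> V"
  shows "capped_degree_sum T V E \<le> (\<Sum>v\<in>S. min (degree V E v) T) + card (V - S) * T"
proof -
  have "capped_degree_sum T V E = (\<Sum>v\<in>S. min (degree V E v) T) + (\<Sum>v\<in>V - S. min (degree V E v) T)"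
    unfolding capped_degree_sum_def using assms by (simp add: sum.subset_diff[of S V])
  moreover have "(\<Sum>v\<in>V - S. min (degree V E v) T) \<le> card (V - S) * T"
    using sum_bounded_above[of "V - S" "\<lambda>v. min (degree V E v) T" T] by simp
  ultimately show ?thesis by linarith
qed

lemma quadratic_deck_bound_fails:
  fixes n k d B :: int
  assumes "k \<ge> 0" "d \<ge> 0" and size: "(4*d+6)*(k+d+5) \<le> n"
    and high: "(2*d+3)*B \<le> d*n"
    and quadratic: "(n-k-2) * (n-k-B) \<le> (n-k-1)*k*(2*d+2) + d*n + k*n"
  shows False
proof -
  define r where "r = n - (4*d+6)*(k+d+5)"
  have "r \<ge> 0" "n = (4*d+6)*(k+d+5) + r" using size by (simp_all add: r_def)
  have "(4*d+6)*(k+d+5) \<ge> 6*k + 30" using assms(1,2) by (simp add: algebra_simps)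
  then have N2: "n - k - 2 \<ge> 0" using size assms(1) by linarith
  have "(n-k-2) * ((2*d+3)*(n-k) - d*n) \<le> (n-k-2) * ((2*d+3)*(n-k-B))"
    by (rule mult_left_mono) (use high N2 in \<open>simp_all add: algebra_simps\<close>)
  also have "\<dots> = (2*d+3)*((n-k-2) * (n-k-B))" by (simp add: algebra_simps)
  also have "\<dots> \<le> (2*d+3)*((n-k-1)*k*(2*d+2) + d*n + k*n)"
    by (rule mult_left_mono) (use quadratic assms(2) in auto)
  finally have "(n-k-2) * ((2*d+3)*(n-k) - d*n) - (2*d+3)*((n-k-1)*k*(2*d+2) + d*n + k*n) \<le> 0"
    by simp
  moreover have "(n-k-2) * ((2*d+3)*(n-k) - d*n) - (2*d+3)*((n-k-1)*k*(2*d+2) + d*n + k*n)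
    = 2520 + 174*r + 3*r^2 + 5274*d + 211*d*r + d*r^2 + 4094*d^2 + 74*d^2*r + 1468*d^3 + 8*d^3*r
      + 248*d^4 + 16*d^5 + 606*k + 21*k*r + 1136*k*d + 21*k*d*r + 722*k*d^2 + 4*k*d^2*r
      + 180*k*d^3 + 16*k*d^4 + 27*k^2 + 42*k^2*d + 16*k^2*d^2"
    unfolding \<open>n = _\<close> by algebra
  moreover have "2520 + 174*r + 3*r^2 + 5274*d + 211*d*r + d*r^2 + 4094*d^2 + 74*d^2*r + 1468*d^3 + 8*d^3*r
      + 248*d^4 + 16*d^5 + 606*k + 21*k*r + 1136*k*d + 21*k*d*r + 722*k*d^2 + 4*k*d^2*r
      + 180*k*d^3 + 16*k*d^4 + 27*k^2 + 42*k^2*d + 16*k^2*d^2 > 0"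
    using assms(1,2) \<open>r \<ge> 0\<close> by (intro add_pos_nonneg mult_nonneg_nonneg zero_le_power) auto
  ultimately show False by simp
qed

lemma deck_counting_inequalities_contradict:
  fixes n k d B Y Z P Q LG LH :: nat
  assumes size: "(4*d+6)*(k+d+5) \<le> n"
    and card_sum: "(n-k)*Z + P + LG = (n-k)*Y + Q + LH"
    and low_G: "LG \<le> Y" and low_H: "Z \<le> LH + k*n + d*n"
    and capped_G: "P \<le> Y" and capped_H: "Z \<le> Q + k*(2*d+2)"
    and degrees: "Q + (n-k) \<le> P + B" and high: "(2*d+3)*B \<le> d*n"
  shows False
proof (rule quadratic_deck_bound_fails)
  define N where "N = int n - int k"
  define D where "D = int Y - int Z"
  define W where "W = int P - int Q"
  have "k \<le> n" and N2: "N \<ge> 2" using size by (simp_all add: N_def algebra_simps)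
  then have "N * int Z + int P + int LG = N * int Y + int Q + int LH"
    using card_sum unfolding N_def by (simp flip: of_nat_mult of_nat_add of_nat_diff)
  then have "N * D = W + int LG - int LH" by (simp add: D_def W_def algebra_simps)
  moreover have "int LG - int LH \<le> D + int d * int n + int k * int n"
    using low_G low_H unfolding D_def by (simp flip: of_nat_mult of_nat_add)
  ultimately have "(N - 1) * D \<le> W + int d * int n + int k * int n"
    by (simp add: algebra_simps)
  moreover have "(N - 1) * (W - int k * (2 * int d + 2)) \<le> (N - 1) * D"
  proof (rule mult_left_mono)
    have "int Z \<le> int (Q + k * (2*d+2))"
      using capped_H by (simp only: of_nat_le_iff)
    then show "W - int k * (2 * int d + 2) \<le> D"
      using capped_G unfolding D_def W_def by (simp add: algebra_simps)
  qed (use N2 in simp)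
  moreover have "(N - 2) * (N - int B) \<le> (N - 2) * W"
    using degrees N2 \<open>k \<le> n\<close> unfolding N_def W_def
    by (intro mult_left_mono) (simp_all flip: of_nat_add of_nat_diff)
  ultimately show "(int n - int k - 2) * (int n - int k - int B)
      \<le> (int n - int k - 1) * int k * (2 * int d + 2) + int d * int n + int k * int n"
    unfolding N_def by (simp add: algebra_simps)
  have "int ((2*d+3)*B) \<le> int (d*n)" using high by (simp only: of_nat_le_iff)
  then show "(2 * int d + 3) * int B \<le> int d * int n" by simp
  have "int ((4*d+6)*(k+d+5)) \<le> int n" using size by (simp only: of_nat_le_iff)
  then show "(4 * int d + 6) * (int k + int d + 5) \<le> int n" by simp
qed simp_all

lemma sum_min_image_le:
  fixes f :: "'a \<Rightarrow> nat" and g :: "'b \<Rightarrow> nat"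
  assumes "finite I" "inj_on u I" "inj_on w I" and less: "\<forall>i\<in>I. g (w i) < f (u i)"
  shows "(\<Sum>v\<in>w ` I. min (g v) T) + card I \<le> (\<Sum>v\<in>u ` I. min (f v) T) + card {v \<in> u ` I. T < f v}"
proof -
  have "(\<Sum>i\<in>I. min (g (w i)) T + 1) \<le> (\<Sum>i\<in>I. min (f (u i)) T + (if T < f (u i) then 1 else 0))"
    using less by (intro sum_mono) (fastforce simp: min_def)
  moreover have "{v \<in> u ` I. T < f v} = u ` {i \<in> I. T < f (u i)}" by auto
  then have "card {v \<in> u ` I. T < f v} = card {i \<in> I. T < f (u i)}"
    using assms(2) by (simp add: card_image inj_on_subset)
  ultimately show ?thesis
    using assms(1) by (simp add: sum.distrib sum.reindex[OF assms(2)] sum.reindex[OF assms(3)]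
        sum.inter_filter[symmetric] del: One_nat_def)
qed

lemma card_edges_le_of_partial_deck:
  fixes I :: "'i set" and u :: "'i \<Rightarrow> 'a" and w :: "'i \<Rightarrow> 'b"
    and d :: nat
  defines "T \<equiv> 2 * d + 2"
  assumes sG: "simple_graph VG EG" and sH: "simple_graph VH EH"
    and cH: "card VH = n" and size: "(4*d+6)*(k+d+5) \<le> n"
    and mG: "2 * card EG \<le> d * n" and mH: "2 * card EH \<le> d * n"
    and I: "finite I" "card I = n - k"
    and iu: "inj_on u I" and uI: "u ` I \<subseteq> VG" and iw: "inj_on w I" and wI: "w ` I \<subseteq> VH"
    and deg: "\<forall>i\<in>I. card EG + degree VH EH (w i) = card EH + degree VG EG (u i)"
    and capped: "\<forall>i\<in>I. capped_degree_sum T VH EH + min (degree VG EG (u i)) T + low_nbr_count T VG EG (u i)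
      = capped_degree_sum T VG EG + min (degree VH EH (w i)) T + low_nbr_count T VH EH (w i)"
  shows "card EG \<le> card EH"
proof (rule ccontr)
  assume more_edges: "\<not> card EG \<le> card EH"
  let ?U = "u ` I" and ?W = "w ` I"
  define degG where "degG = degree VG EG"
  define degH where "degH = degree VH EH"
  have fG: "finite VG" and fH: "finite VH" using sG sH simple_graph_finite_vertices by auto
  have "k \<le> n" using size by (simp add: algebra_simps)
  then have cW: "card (VH - ?W) = k"
    using card_image[OF iw] I cH wI fH by (simp add: card_Diff_subset finite_subset)
  have "\<forall>i\<in>I. degH (w i) < degG (u i)"
    using deg more_edges unfolding degG_def degH_def by auto
  then have degrees: "(\<Sum>v\<in>?W. min (degH v) T) + (n - k)
      \<le> (\<Sum>v\<in>?U. min (degG v) T) + card {v \<in> ?U. T < degG v}"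
    using sum_min_image_le[OF I(1) iu iw] I(2) by simp
  have "(\<Sum>i\<in>I. capped_degree_sum T VH EH + min (degG (u i)) T + low_nbr_count T VG EG (u i))
      = (\<Sum>i\<in>I. capped_degree_sum T VG EG + min (degH (w i)) T + low_nbr_count T VH EH (w i))"
    using capped unfolding degG_def degH_def by (intro sum.cong) auto
  then have card_sum: "(n - k) * capped_degree_sum T VH EH + (\<Sum>v\<in>?U. min (degG v) T)
        + (\<Sum>v\<in>?U. low_nbr_count T VG EG v)
      = (n - k) * capped_degree_sum T VG EG + (\<Sum>v\<in>?W. min (degH v) T)
        + (\<Sum>v\<in>?W. low_nbr_count T VH EH v)"
    using I by (simp add: sum.distrib sum.reindex[OF iu] sum.reindex[OF iw])
  show False
  proof (rule deck_counting_inequalities_contradict[OF size card_sum])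
    show "(\<Sum>v\<in>?U. low_nbr_count T VG EG v) \<le> capped_degree_sum T VG EG"
      by (rule sum_low_nbr_count_le_capped_degree_sum[OF sG uI])
    show "capped_degree_sum T VH EH \<le> (\<Sum>v\<in>?W. low_nbr_count T VH EH v) + k * n + d * n"
      using capped_degree_sum_le_sum_low_nbr_count[OF sH wI, of T] cW cH mH by simp
    show "(\<Sum>v\<in>?U. min (degG v) T) \<le> capped_degree_sum T VG EG"
      unfolding degG_def by (rule sum_capped_degree_le_capped_degree_sum[OF fG uI])
    show "capped_degree_sum T VH EH \<le> (\<Sum>v\<in>?W. min (degH v) T) + k * (2 * d + 2)"
      using capped_degree_sum_le_sum_capped_degree[OF fH wI, of T EH] cW
      unfolding degH_def T_def by simp
    show "(2 * d + 3) * card {v \<in> ?U. T < degG v} \<le> d * n"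
      using order_trans[OF card_high_degree_le[OF sG uI, of T] mG]
      unfolding degG_def T_def by (simp add: algebra_simps)
  qed (rule degrees)
qed

theorem theorem1p3:
  fixes VG :: "'a set" and EG :: "'a set set"
    and VH :: "'b set" and EH :: "'b set set"
    and d n k :: nat
    and u :: "nat \<Rightarrow> 'a" and w :: "nat \<Rightarrow> 'b"
  assumes "simple_graph VG EG" and "simple_graph VH EH"
    and "card VG = n" and "card VH = n" and "n \<ge> 3"
    and "real k \<le> real n / (4 * real d + 6) - real d - 5"
    and "avg_degree VG EG \<le> real d" and "avg_degree VH EH \<le> real d"
    and "inj_on u {1..n - k}" and "u ` {1..n - k} \<subseteq> VG"
    and "inj_on w {1..n - k}" and "w ` {1..n - k} \<subseteq> VH"
    and "\<forall>i\<in>{1..n - k}. graph_iso (VG - {u i}) (del_vertex_edges EG (u i))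
                                   (VH - {w i}) (del_vertex_edges EH (w i))"
  shows "card EG = card EH"
proof -
  note sG = assms(1) and sH = assms(2) and iso = assms(13)
  have "real k + real d + 5 \<le> real n / (4 * real d + 6)" using assms(6) by simp
  then have "(real k + real d + 5) * (4 * real d + 6) \<le> real n"
    by (simp add: le_divide_eq add_pos_nonneg)
  then have "real ((4*d+6)*(k+d+5)) \<le> real n" by (simp add: algebra_simps)
  then have size: "(4*d+6)*(k+d+5) \<le> n" by (simp only: of_nat_le_iff)
  have mG: "2 * card EG \<le> d * n" and mH: "2 * card EH \<le> d * n"
    using avg_degree_le_imp_edge_bound assms(3,4,5,7,8) by fastforce+
  have "u i \<in> VG" "w i \<in> VH" if "i \<in> {1..n - k}" for i
    using that assms(10,12) by auto
  then have deg: "\<forall>i\<in>{1..n - k}. card EG + degree VH EH (w i) = card EH + degree VG EG (u i)"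
    and capped: "\<forall>i\<in>{1..n - k}.
      capped_degree_sum (2*d+2) VH EH + min (degree VG EG (u i)) (2*d+2) + low_nbr_count (2*d+2) VG EG (u i)
      = capped_degree_sum (2*d+2) VG EG + min (degree VH EH (w i)) (2*d+2) + low_nbr_count (2*d+2) VH EH (w i)"
    using iso common_card_degree_difference[OF sG sH] common_card_capped_degree_sum[OF sG sH] by auto
  show ?thesis
    using card_edges_le_of_partial_deck[OF sG sH assms(4) size mG mH _ _ assms(9-12) deg capped]
      card_edges_le_of_partial_deck[OF sH sG assms(3) size mH mG _ _ assms(11,12,9,10)]
      deg capped by fastforce
qed

end
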